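(* Let $\mathcal{S}\subset\mathbb{R}^n$ be a measurable set with finite positive volume $V(\mathcal{S})$ and normalized second moment $$G(\mathcal{S})=\frac{1}{nV(\mathcal{S})}\frac{\int_{\mathcal{S}}\|\mathbf{x}\|^2d\mathbf{x}}{V(\mathcal{S})^{\frac{2}{n}}}.$$ Let $r_{\mathrm{eff}}$ be defined by $V(\mathcal{S})=V_n r_{\mathrm{eff}}^n$, where $V_n$ is the volume of the $n$-dimensional unit ball. For any $0<\epsilon<1$ define $$r_{\epsilon}=\sqrt{\frac{2\pi e G(\mathcal{S})-\frac{n}{n+2}(1-\epsilon)^{1+\frac{2}{n}}}{\epsilon}}\; r_{\mathrm{eff}}.$$ If $\mathbf{U}$ is uniformly distributed on $\mathcal{S}$, then $$\Pr\left(\mathbf{U}\notin \mathcal{B}(\mathbf{0},r_{\epsilon})\right)\leq\epsilon,$$ where $\mathcal{B}(\mathbf{0},r)$ is the closed Euclidean ball of radius $r$ centred at the origin. *)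

theory Defs
  imports "HOL-Analysis.Analysis" "HOL-Probability.Probability"
begin

definition unit_ball_vol :: "'n::finite itself \<Rightarrow> real" where
  "unit_ball_vol _ = measure lebesgue (ball (0 :: real ^ 'n) 1)"

definition nsm :: "(real ^ 'n::finite) set \<Rightarrow> real" where
  "nsm S = (let n = real CARD('n); V = measure lebesgue S in
     (1 / (n * V)) * (LINT x:S|lebesgue. (norm x)^2) / (V powr (2 / n)))"

definition r_eff :: "(real ^ 'n::finite) set \<Rightarrow> real" where
  "r_eff S = (measure lebesgue S / unit_ball_vol TYPE('n)) powr (1 / real CARD('n))"

definition r_eps :: "(real ^ 'n::finite) set \<Rightarrow> real \<Rightarrow> real" where
  "r_eps S \<epsilon> = (let n = real CARD('n) in
     sqrt ((2 * pi * exp 1 * nsm S - n / (n + 2) * (1 - \<epsilon>) powr (1 + 2 / n)) / \<epsilon>) * r_eff S)"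

end

theory Submission
  imports Defs
begin

text \<open>
  Write \<open>V\<close>, \<open>I\<close> for the volume and second moment of \<open>S\<close>, \<open>c = n/(n+2)\<close> and
  \<open>q = I / (V r\<^sub>e\<^sub>f\<^sub>f\<^sup>2) = n V\<^sub>n\<^bsup>2/n\<^esup> G(S)\<close>. By a layer-cake argument, a set of volume \<open>m\<close>
  has second moment at least that of the centred ball of volume \<open>m\<close>, namely
  \<open>c m (m/V\<^sub>n)\<^bsup>2/n\<^esup>\<close>. Applying this to the part of \<open>S\<close> inside \<open>B(0,r)\<close>, of volume
  \<open>(1-p)V\<close>, and bounding \<open>\<parallel>x\<parallel>\<^sup>2 \<ge> r\<^sup>2\<close> outside, gives
  \<open>f(p) \<le> q\<close> for the convex function \<open>f(t) = c(1-t)\<^bsup>1+2/n\<^esup> + t (r/r\<^sub>e\<^sub>f\<^sub>f)\<^sup>2\<close>.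
  The choice \<open>r = r\<^sub>\<epsilon>\<close> makes \<open>f(\<epsilon>) = 2\<pi>e G(S)\<close>, which exceeds \<open>q\<close> because
  \<open>n V\<^sub>n\<^bsup>2/n\<^esup> < 2\<pi>e\<close> (from \<open>\<Gamma>(x+1) > x\<^sup>x e\<^sup>-\<^sup>x\<close>), while \<open>f(0) = c \<le> q\<close> is the ball
  inequality for \<open>S\<close> itself. Convexity then forces \<open>p \<le> \<epsilon>\<close>.
\<close>

lemma nn_integral_exp_minus_atLeast:
  fixes c y :: real
  assumes "0 \<le> c"
  shows "(\<integral>\<^sup>+t. ennreal (c * exp (-t)) * indicator {y..} t \<partial>lborel) = ennreal (c * exp (-y))"
proof -
  have "((\<lambda>t. - c * exp (-t)) \<longlongrightarrow> - c * 0) at_top"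
    by (intro tendsto_mult tendsto_const filterlim_compose[OF exp_at_bot filterlim_uminus_at_bot_at_top])
  then have "(\<integral>\<^sup>+t. ennreal (c * exp (-t)) * indicator {y..} t \<partial>lborel) = ennreal (0 - (- c * exp (-y)))"
    by (intro nn_integral_FTC_atLeast) (auto intro!: derivative_eq_intros simp: assms)
  then show ?thesis by simp
qed

lemma powr_self_mult_exp_less_Gamma:
  fixes x :: real
  assumes "0 < x"
  shows "x powr x * exp (-x) < Gamma (x + 1)"
proof -
  \<comment> \<open>Bounding \<open>t\<^sup>x\<close> below by step functions with a jump at \<open>x/2\<close> as well as at \<open>x\<close> makes the bound strict.\<close>
  define a where "a = (x / 2) powr x"
  define b where "b = x powr x - a"
  have "0 < a" using assms by (simp add: a_def)
  moreover have "0 < b" using assms by (simp add: a_def b_def powr_less_mono2)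
  ultimately have split_bound: "a * exp (-t) * indicator {x/2..} t + b * exp (-t) * indicator {x..} t
      \<le> indicator {0..} t * t powr x / exp t" for t
  proof -
    have "a \<le> t powr x" if "x / 2 \<le> t" using that assms by (simp add: a_def powr_mono2)
    moreover have "a + b \<le> t powr x" if "x \<le> t" using that assms by (simp add: b_def powr_mono2)
    ultimately show ?thesis
      using \<open>0 < a\<close> \<open>0 < b\<close> assms
      by (auto simp: indicator_def exp_minus field_simps)
         (metis distrib_right exp_gt_zero less_imp_le mult.commute mult_right_mono)
  qed
  have "ennreal (a * exp (-(x/2)) + b * exp (-x))
      = (\<integral>\<^sup>+t. ennreal (a * exp (-t)) * indicator {x/2..} t + ennreal (b * exp (-t)) * indicator {x..} t \<partial>lborel)"
    using \<open>0 < a\<close> \<open>0 < b\<close>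
    by (simp add: nn_integral_add nn_integral_exp_minus_atLeast)
  also have "\<dots> \<le> (\<integral>\<^sup>+t. ennreal (indicator {0..} t * t powr x / exp t) \<partial>lborel)"
  proof (rule nn_integral_mono)
    fix t :: real
    have "ennreal (a * exp (-t)) * indicator {x/2..} t + ennreal (b * exp (-t)) * indicator {x..} t
        = ennreal (a * exp (-t) * indicator {x/2..} t + b * exp (-t) * indicator {x..} t)"
      using \<open>0 < a\<close> \<open>0 < b\<close> by (auto simp: indicator_def ennreal_plus)
    then show "ennreal (a * exp (-t)) * indicator {x/2..} t + ennreal (b * exp (-t)) * indicator {x..} t
        \<le> ennreal (indicator {0..} t * t powr x / exp t)"
      using split_bound by (simp add: ennreal_leI)
  qed
  also have "\<dots> = Gamma (x + 1)"
    using Gamma_conv_nn_integral_real[of "x + 1"] assms by simp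
  finally have "a * exp (-(x/2)) + b * exp (-x) \<le> Gamma (x + 1)"
    using assms by (simp add: ennreal_le_iff)
  moreover have "a * exp (-x) < a * exp (-(x/2))" using \<open>0 < a\<close> assms by simp
  ultimately show ?thesis by (simp add: b_def algebra_simps)
qed

lemma unit_ball_vol_powr_less:
  fixes d :: real
  assumes "0 < d"
  shows "d * Ball_Volume.unit_ball_vol d powr (2 / d) < 2 * pi * exp 1"
proof -
  define x where "x = d / 2"
  have "0 < x" using assms by (simp add: x_def)
  have "exp (-x) powr (1 / x) = exp (-1)"
    using \<open>0 < x\<close> by (simp add: powr_def)
  then have "x * exp (-1) = (x powr x * exp (-x)) powr (1 / x)"
    using \<open>0 < x\<close> by (simp add: powr_mult powr_powr)
  also have "\<dots> < Gamma (x + 1) powr (1 / x)"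
    using \<open>0 < x\<close> powr_self_mult_exp_less_Gamma[OF \<open>0 < x\<close>] by (intro powr_less_mono2) auto
  finally have Gamma_root: "x * exp (-1) < Gamma (x + 1) powr (1 / x)" .
  have "Ball_Volume.unit_ball_vol d powr (2 / d) = pi / Gamma (x + 1) powr (1 / x)"
    using \<open>0 < x\<close> by (simp add: Ball_Volume.unit_ball_vol_def x_def powr_divide powr_powr)
  also have "\<dots> < pi / (x * exp (-1))"
    using \<open>0 < x\<close> Gamma_root by (intro divide_strict_left_mono mult_pos_pos) (auto simp: mult_less_0_iff)
  finally show ?thesis
    using assms by (simp add: x_def exp_minus field_simps)
qed

lemma nn_integral_norm_sq_layer_cake:
  fixes A :: "'a::euclidean_space set"
  assumes "A \<in> sets lborel"
  shows "(\<integral>\<^sup>+x. indicator A x * ennreal (norm x ^ 2) \<partial>lborel)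
       = (\<integral>\<^sup>+s. ennreal (2 * s) * indicator {0..} s * emeasure lborel (A \<inter> {x. s \<le> norm x}) \<partial>lborel)"
proof -
  define h where "h x s = indicator A x * (ennreal (2 * s) * of_bool (0 \<le> s \<and> s \<le> norm x))" for x :: 'a and s :: real
  have "case_prod h \<in> borel_measurable (lborel \<Otimes>\<^sub>M lborel)"
    unfolding h_def using assms by measurable
  have norm_sq: "ennreal (norm x ^ 2) = (\<integral>\<^sup>+s. ennreal (2 * s) * indicator {0..norm x} s \<partial>lborel)" for x :: 'a
  proof -
    have "((\<lambda>s. 2 * s) has_integral (norm x ^ 2 - 0 ^ 2)) {0..norm x}"
      by (intro fundamental_theorem_of_calculus)
         (auto simp flip: has_real_derivative_iff_has_vector_derivative intro!: derivative_eq_intros)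
    then show ?thesis
      by (subst nn_integral_has_integral_lebesgue') auto
  qed
  have "(\<integral>\<^sup>+x. indicator A x * ennreal (norm x ^ 2) \<partial>lborel) = (\<integral>\<^sup>+x. \<integral>\<^sup>+s. h x s \<partial>lborel \<partial>lborel)"
    unfolding norm_sq h_def
    by (intro nn_integral_cong) (auto simp: indicator_def nn_integral_cmult[symmetric] simp del: nn_integral_cmult)
  also have "\<dots> = (\<integral>\<^sup>+s. \<integral>\<^sup>+x. h x s \<partial>lborel \<partial>lborel)"
    by (rule lborel_pair.Fubini'[symmetric]) fact
  also have "\<dots> = (\<integral>\<^sup>+s. \<integral>\<^sup>+x. (ennreal (2 * s) * indicator {0..} s) * indicator (A \<inter> {x. s \<le> norm x}) x \<partial>lborel \<partial>lborel)"
    by (intro nn_integral_cong) (auto simp: h_def indicator_def)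
  also have "\<dots> = (\<integral>\<^sup>+s. ennreal (2 * s) * indicator {0..} s * emeasure lborel (A \<inter> {x. s \<le> norm x}) \<partial>lborel)"
    using assms by (intro nn_integral_cong nn_integral_cmult_indicator) auto
  finally show ?thesis .
qed

lemma has_integral_mult_diff_power:
  fixes m v \<rho> :: real and N :: nat
  assumes "0 \<le> \<rho>"
  shows "((\<lambda>s. 2 * s * (m - v * s ^ N)) has_integral (m * \<rho>^2 - 2 * v * \<rho>^(N+2) / (real N + 2))) {0..\<rho>}"
proof -
  let ?F = "\<lambda>s::real. m * s^2 - 2 * v * s^(N+2) / (real N + 2)"
  have "(?F has_real_derivative 2 * s * (m - v * s ^ N)) (at s)" for s
  proof -
    have "((\<lambda>s. s^(N+2)) has_real_derivative (real N + 2) * s^(N+1)) (at s)"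
      using DERIV_pow[of "N+2" s] by (simp add: add.commute)
    moreover have "((\<lambda>s. s^2) has_real_derivative 2 * s) (at s)"
      using DERIV_pow[of 2 s] by simp
    ultimately have "(?F has_real_derivative m * (2 * s) - 2 * v * ((real N + 2) * s^(N+1)) / (real N + 2)) (at s)"
      by (intro DERIV_diff DERIV_cmult DERIV_cdivide)
    also have "m * (2 * s) - 2 * v * ((real N + 2) * s^(N+1)) / (real N + 2) = 2 * s * (m - v * s ^ N)"
      by (simp add: field_simps)
    finally show ?thesis .
  qed
  then have "((\<lambda>s. 2 * s * (m - v * s ^ N)) has_integral (?F \<rho> - ?F 0)) {0..\<rho>}"
    using assms by (intro fundamental_theorem_of_calculus)
      (auto simp: has_real_derivative_iff_has_vector_derivative[symmetric] intro: has_field_derivative_at_within)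
  then show ?thesis by simp
qed

lemma nn_integral_norm_sq_ge:
  fixes A :: "'a::euclidean_space set" and \<rho> :: real
  defines "v \<equiv> Ball_Volume.unit_ball_vol DIM('a)" and "N \<equiv> DIM('a)"
  assumes "A \<in> sets lborel" and "emeasure lborel A < \<infinity>"
    and "0 \<le> \<rho>" and "v * \<rho> ^ N \<le> measure lborel A"
  shows "ennreal (measure lborel A * \<rho>^2 - 2 * v * \<rho>^(N+2) / (real N + 2))
           \<le> (\<integral>\<^sup>+x. indicator A x * ennreal (norm x ^ 2) \<partial>lborel)"
proof -
  define m where "m = measure lborel A"
  have deficit_nonneg: "0 \<le> m - v * s ^ N" if "0 \<le> s" "s \<le> \<rho>" for s
    using that assms(6) power_mono[OF that(2,1), of N] unfolding m_def
    by (smt (verit) mult_left_mono unit_ball_vol_nonneg v_def of_nat_0_le_iff)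
  have outside_ball: "ennreal (m - v * s ^ N) \<le> emeasure lborel (A \<inter> {x. s \<le> norm x})"
    if "0 \<le> s" for s
  proof -
    have "ennreal m \<le> emeasure lborel ((A \<inter> {x. s \<le> norm x}) \<union> ball 0 s)"
      using assms(3,4) by (auto simp: m_def emeasure_eq_ennreal_measure[symmetric] intro!: emeasure_mono)
    also have "\<dots> \<le> emeasure lborel (A \<inter> {x. s \<le> norm x}) + ennreal (v * s ^ N)"
      using assms(3) emeasure_subadditive[of "A \<inter> {x. s \<le> norm x}" lborel "ball 0 s"]
      by (simp add: emeasure_ball[OF that] v_def N_def)
    finally show ?thesis
      using that by (subst ennreal_minus[symmetric]) (auto simp: ennreal_minus_le_iff add.commute v_def)
  qed
  have "ennreal (m * \<rho>^2 - 2 * v * \<rho>^(N+2) / (real N + 2))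
      = (\<integral>\<^sup>+s. ennreal (2 * s * (m - v * s ^ N)) * indicator {0..\<rho>} s \<partial>lborel)"
    using deficit_nonneg by (intro nn_integral_has_integral_lebesgue'[symmetric] has_integral_mult_diff_power assms) auto
  also have "\<dots> \<le> (\<integral>\<^sup>+s. ennreal (2 * s) * indicator {0..} s * emeasure lborel (A \<inter> {x. s \<le> norm x}) \<partial>lborel)"
  proof (intro nn_integral_mono)
    fix s :: real
    show "ennreal (2 * s * (m - v * s ^ N)) * indicator {0..\<rho>} s
        \<le> ennreal (2 * s) * indicator {0..} s * emeasure lborel (A \<inter> {x. s \<le> norm x})"
      using deficit_nonneg[of s] outside_ball[of s]
      by (cases "s \<in> {0..\<rho>}") (auto simp: ennreal_mult intro!: mult_left_mono)
  qed
  also have "\<dots> = (\<integral>\<^sup>+x. indicator A x * ennreal (norm x ^ 2) \<partial>lborel)"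
    using assms(3) by (rule nn_integral_norm_sq_layer_cake[symmetric])
  finally show ?thesis by (simp add: m_def)
qed

lemma set_integral_norm_sq_ge_ball:
  fixes A :: "'a::euclidean_space set"
  defines "v \<equiv> Ball_Volume.unit_ball_vol DIM('a)" and "n \<equiv> real DIM('a)"
  assumes "A \<in> sets lebesgue" and "emeasure lebesgue A < \<infinity>"
    and "set_integrable lebesgue A (\<lambda>x. norm x ^ 2)"
  shows "n / (n + 2) * measure lebesgue A * (measure lebesgue A / v) powr (2 / n)
           \<le> (LINT x:A|lebesgue. norm x ^ 2)"
proof -
  define m where "m = measure lebesgue A"
  define \<rho> where "\<rho> = (m / v) powr (1 / n)"
  define B where "B = main_part lborel A"
  have "0 < v" "0 < n" "0 \<le> \<rho>" by (simp_all add: v_def n_def \<rho>_def)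
  have B: "B \<in> sets lborel" "emeasure lborel B = emeasure lebesgue A"
    using main_part_sets[OF assms(3)] assms(3) by (simp_all add: B_def)
  then have mB: "measure lborel B = m" by (simp add: m_def measure_def)
  have \<rho>_power: "v * \<rho> ^ DIM('a) = m"
    using \<open>0 < v\<close> by (cases "m = 0") (simp_all add: \<rho>_def n_def m_def powr_power)
  have "ennreal (m * \<rho>^2 - 2 * v * \<rho>^(DIM('a)+2) / (n + 2))
      \<le> (\<integral>\<^sup>+x. indicator B x * ennreal (norm x ^ 2) \<partial>lborel)"
    unfolding mB[symmetric] v_def n_def
    using B assms(4) \<rho>_power mB \<open>0 \<le> \<rho>\<close> by (intro nn_integral_norm_sq_ge) (simp_all add: v_def)
  also have "\<dots> = (\<integral>\<^sup>+x. indicator A x * ennreal (norm x ^ 2) \<partial>lborel)"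
  proof (rule nn_integral_cong_AE)
    show "AE x in lborel. indicator B x * ennreal (norm x ^ 2) = indicator A x * ennreal (norm x ^ 2)"
      using AE_in_main_part[OF assms(3)] unfolding B_def by eventually_elim (simp add: indicator_def)
  qed
  also have "\<dots> = (\<integral>\<^sup>+x. ennreal (indicator A x *\<^sub>R norm x ^ 2) \<partial>lebesgue)"
    by (simp add: nn_integral_completion indicator_mult_ennreal mult.commute)
  also have "\<dots> = ennreal (LINT x:A|lebesgue. norm x ^ 2)"
    using assms(5) unfolding set_lebesgue_integral_def set_integrable_def
    by (intro nn_integral_eq_integral) auto
  finally have "m * \<rho>^2 - 2 * v * \<rho>^(DIM('a)+2) / (n + 2) \<le> (LINT x:A|lebesgue. norm x ^ 2)"
    by (simp add: set_lebesgue_integral_def integral_nonneg_AE)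
  moreover have "m * \<rho>^2 - 2 * v * \<rho>^(DIM('a)+2) / (n + 2) = n / (n + 2) * m * (m / v) powr (2 / n)"
  proof -
    have "\<rho>^2 = (m / v) powr (2 / n)"
      by (simp add: \<rho>_def power2_eq_square powr_add[symmetric])
    moreover have "v * \<rho>^(DIM('a)+2) = m * \<rho>^2"
      by (simp add: power_add power2_eq_square \<rho>_power[symmetric])
    ultimately show ?thesis
      using \<open>0 < n\<close> by (simp add: field_simps)
  qed
  ultimately show ?thesis by (simp add: m_def)
qed

lemma set_integral_norm_sq_ge_ball_and_tail:
  fixes S :: "'a::euclidean_space set" and r :: real
  defines "v \<equiv> Ball_Volume.unit_ball_vol DIM('a)" and "n \<equiv> real DIM('a)"
    and "m\<^sub>1 \<equiv> measure lebesgue (S \<inter> cball 0 r)" and "m\<^sub>2 \<equiv> measure lebesgue (S - cball 0 r)"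
  assumes S: "S \<in> sets lebesgue" "emeasure lebesgue S < \<infinity>"
    and int: "set_integrable lebesgue S (\<lambda>x. norm x ^ 2)" and "0 \<le> r"
  shows "n / (n + 2) * m\<^sub>1 * (m\<^sub>1 / v) powr (2 / n) + r^2 * m\<^sub>2 \<le> (LINT x:S|lebesgue. norm x ^ 2)"
proof -
  have fin: "emeasure lebesgue (S \<inter> cball 0 r) < \<infinity>" "emeasure lebesgue (S - cball 0 r) < \<infinity>"
    using S by (auto intro: le_less_trans[OF emeasure_mono])
  have int_in: "set_integrable lebesgue (S \<inter> cball 0 r) (\<lambda>x. norm x ^ 2)"
    using S by (intro set_integrable_subset[OF int]) auto
  have int_out: "set_integrable lebesgue (S - cball 0 r) (\<lambda>x. norm x ^ 2)"
    using S by (intro set_integrable_subset[OF int]) auto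
  have "n / (n + 2) * m\<^sub>1 * (m\<^sub>1 / v) powr (2 / n) \<le> (LINT x:S \<inter> cball 0 r|lebesgue. norm x ^ 2)"
    unfolding v_def n_def m\<^sub>1_def using S by (intro set_integral_norm_sq_ge_ball fin int_in) auto
  moreover have "r^2 * m\<^sub>2 = (LINT x:S - cball 0 r|lebesgue. r^2)"
    using S fin by (subst set_integral_const) (auto simp: m\<^sub>2_def)
  moreover have "\<dots> \<le> (LINT x:S - cball 0 r|lebesgue. norm x ^ 2)"
    using S fin \<open>0 \<le> r\<close> int_out
    by (intro set_integral_mono power_mono) (auto simp: set_integrable_def integrable_indicator_iff)
  ultimately have "n / (n + 2) * m\<^sub>1 * (m\<^sub>1 / v) powr (2 / n) + r^2 * m\<^sub>2
      \<le> (LINT x:S \<inter> cball 0 r|lebesgue. norm x ^ 2) + (LINT x:S - cball 0 r|lebesgue. norm x ^ 2)"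
    by linarith
  also have "\<dots> = (LINT x:(S \<inter> cball 0 r) \<union> (S - cball 0 r)|lebesgue. norm x ^ 2)"
    using S int_in int_out by (intro set_integral_Un[symmetric]) auto
  also have "(S \<inter> cball 0 r) \<union> (S - cball 0 r) = S"
    by blast
  finally show ?thesis .
qed

lemma one_minus_powr_convex:
  fixes a l t :: real
  assumes "1 \<le> a" "0 \<le> l" "l \<le> 1" "0 \<le> t" "t \<le> 1"
  shows "(1 - l * t) powr a \<le> (1 - l) + l * (1 - t) powr a"
proof (cases "t = 1")
  case True
  \<comment> \<open>\<open>powr_convex\<close> only covers \<open>{0<..}\<close>, so the endpoint \<open>1 - t = 0\<close> is treated apart.\<close>
  then have "(1 - l) powr a \<le> (1 - l) powr 1"
    using assms by (intro powr_mono') auto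
  with True show ?thesis using assms by simp
next
  case False
  have "(1 - l * t) powr a = ((1 - l) *\<^sub>R 1 + l *\<^sub>R (1 - t)) powr a"
    by (simp add: algebra_simps)
  also have "\<dots> \<le> (1 - l) * 1 powr a + l * (1 - t) powr a"
    using assms False by (intro convex_onD[OF powr_convex]) auto
  finally show ?thesis by simp
qed

text \<open>The function \<open>f(t) = c (1-t)\<^bsup>a\<^esup> + t (k - c (1-\<epsilon>)\<^bsup>a\<^esup>)/\<epsilon>\<close> is convex, satisfies
  \<open>f(0) = c \<le> q < k = f(\<epsilon>)\<close>, hence \<open>f(p) \<le> q\<close> forces \<open>p \<le> \<epsilon>\<close>.\<close>

lemma le_of_convex_power_bound:
  fixes a c q k \<epsilon> p :: real
  assumes "1 \<le> a" "0 \<le> c" "c \<le> q" "q < k" "0 < \<epsilon>" "\<epsilon> < 1" "0 \<le> p" "p \<le> 1"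
    and bound: "c * (1 - p) powr a + p * ((k - c * (1 - \<epsilon>) powr a) / \<epsilon>) \<le> q"
  shows "p \<le> \<epsilon>"
proof (rule ccontr)
  assume "\<not> p \<le> \<epsilon>"
  define l where "l = \<epsilon> / p"
  have "0 < l" "l < 1" "l * p = \<epsilon>"
    using \<open>\<not> p \<le> \<epsilon>\<close> assms by (auto simp: l_def)
  have "c * (1 - \<epsilon>) powr a \<le> c * ((1 - l) + l * (1 - p) powr a)"
    using one_minus_powr_convex[of a l p] \<open>0 < l\<close> \<open>l < 1\<close> \<open>l * p = \<epsilon>\<close> assms
    by (intro mult_left_mono) auto
  moreover have "l * (p * ((k - c * (1 - \<epsilon>) powr a) / \<epsilon>)) = k - c * (1 - \<epsilon>) powr a"
    using \<open>l * p = \<epsilon>\<close> \<open>0 < \<epsilon>\<close> by (simp flip: mult.assoc)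
  ultimately have "k \<le> c * (1 - l) + l * (c * (1 - p) powr a + p * ((k - c * (1 - \<epsilon>) powr a) / \<epsilon>))"
    by (simp add: algebra_simps)
  also have "\<dots> \<le> c * (1 - l) + l * q"
    using bound \<open>0 < l\<close> by simp
  also have "\<dots> \<le> q"
    using mult_right_mono[OF \<open>c \<le> q\<close>, of "1 - l"] \<open>l < 1\<close> by (simp add: algebra_simps)
  finally show False using \<open>q < k\<close> by simp
qed

lemma unit_ball_vol_eq: "Defs.unit_ball_vol TYPE('n::finite) = Ball_Volume.unit_ball_vol (real CARD('n))"
  using emeasure_ball[of 1 "0 :: real ^ 'n"]
  by (simp add: Defs.unit_ball_vol_def measure_completion measure_def)

lemma unit_ball_vol_type_pos: "0 < Defs.unit_ball_vol TYPE('n::finite)"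
  by (simp add: unit_ball_vol_eq)

lemma r_eff_sq:
  fixes S :: "(real ^ 'n::finite) set"
  shows "r_eff S ^ 2 = (measure lebesgue S / Defs.unit_ball_vol TYPE('n)) powr (2 / real CARD('n))"
  by (simp add: r_eff_def power2_eq_square powr_add[symmetric])

lemma r_eff_pos:
  fixes S :: "(real ^ 'n::finite) set"
  assumes "0 < measure lebesgue S"
  shows "0 < r_eff S"
  using assms unit_ball_vol_type_pos[where 'n='n] by (simp add: r_eff_def)

lemma set_integral_norm_sq_eq_nsm:
  fixes S :: "(real ^ 'n::finite) set"
  defines "n \<equiv> real CARD('n)" and "v \<equiv> Defs.unit_ball_vol TYPE('n)"
  assumes "0 < measure lebesgue S"
  shows "(LINT x:S|lebesgue. norm x ^ 2) = n * v powr (2 / n) * nsm S * measure lebesgue S * r_eff S ^ 2"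
proof -
  have "0 < v" "0 < n" by (simp_all add: v_def n_def unit_ball_vol_type_pos)
  then show ?thesis
    using assms(3) by (simp add: r_eff_sq nsm_def Let_def powr_divide n_def v_def field_simps)
qed

lemma nsm_ge_ball:
  fixes S :: "(real ^ 'n::finite) set"
  defines "n \<equiv> real CARD('n)" and "v \<equiv> Defs.unit_ball_vol TYPE('n)"
  assumes S: "S \<in> sets lebesgue" "emeasure lebesgue S < \<infinity>" "0 < measure lebesgue S"
    and "set_integrable lebesgue S (\<lambda>x. norm x ^ 2)"
  shows "n / (n + 2) \<le> n * v powr (2 / n) * nsm S"
proof -
  let ?w = "measure lebesgue S * r_eff S ^ 2"
  have "n / (n + 2) * ?w \<le> n * v powr (2 / n) * nsm S * ?w"
    using set_integral_norm_sq_ge_ball[of S] set_integral_norm_sq_eq_nsm[of S] assms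
    by (simp add: r_eff_sq unit_ball_vol_eq mult_ac)
  moreover have "0 < ?w"
    using S r_eff_pos[of S] by simp
  ultimately show ?thesis by (rule mult_right_le_imp_le)
qed

lemma nsm_ge_tail:
  fixes S :: "(real ^ 'n::finite) set" and r :: real
  defines "n \<equiv> real CARD('n)" and "v \<equiv> Defs.unit_ball_vol TYPE('n)"
    and "p \<equiv> measure (uniform_measure lebesgue S) (- cball 0 r)"
  assumes S: "S \<in> sets lebesgue" "emeasure lebesgue S < \<infinity>" "0 < measure lebesgue S"
    and "set_integrable lebesgue S (\<lambda>x. norm x ^ 2)" and "0 \<le> r"
  shows "n / (n + 2) * (1 - p) powr (1 + 2 / n) + p * (r / r_eff S) ^ 2 \<le> n * v powr (2 / n) * nsm S"
proof -
  define V where "V = measure lebesgue S"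
  define m\<^sub>1 where "m\<^sub>1 = measure lebesgue (S \<inter> cball 0 r)"
  define m\<^sub>2 where "m\<^sub>2 = measure lebesgue (S - cball 0 r)"
  let ?w = "V * r_eff S ^ 2"
  have "0 < V" "0 < r_eff S" using S r_eff_pos[of S] by (simp_all add: V_def)
  then have "0 < ?w" by simp
  have "emeasure lebesgue S \<noteq> 0" "emeasure lebesgue S \<noteq> \<infinity>"
    using S by (auto simp: measure_def)
  then have p: "p = m\<^sub>2 / V"
    by (simp add: p_def m\<^sub>2_def V_def Diff_eq)
  have "S \<inter> cball 0 r \<in> sets lebesgue" using S by auto
  then have "m\<^sub>2 = V - m\<^sub>1"
    using S \<open>emeasure lebesgue S \<noteq> \<infinity>\<close> measure_Diff[of lebesgue S "S \<inter> cball 0 r"]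
    by (simp add: m\<^sub>1_def m\<^sub>2_def V_def Diff_Int)
  then have m\<^sub>1: "m\<^sub>1 = (1 - p) * V" using S by (simp add: p V_def algebra_simps)
  have "0 \<le> 1 - p"
    using m\<^sub>1 S measure_nonneg[of lebesgue "S \<inter> cball 0 r"] by (simp add: m\<^sub>1_def V_def zero_le_mult_iff)
  have "(m\<^sub>1 / v) powr (2 / n) = (1 - p) powr (2 / n) * r_eff S ^ 2"
    unfolding m\<^sub>1 r_eff_sq V_def n_def v_def by (simp only: powr_mult[symmetric] times_divide_eq_right)
  then have "m\<^sub>1 * (m\<^sub>1 / v) powr (2 / n) = (1 - p) powr (1 + 2 / n) * ?w"
    using \<open>0 \<le> 1 - p\<close> by (simp add: m\<^sub>1 powr_mult_base[symmetric])
  moreover have "r ^ 2 * m\<^sub>2 = p * (r / r_eff S) ^ 2 * ?w"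
    using \<open>0 < V\<close> \<open>0 < r_eff S\<close> by (simp add: p power_divide)
  ultimately have "(n / (n + 2) * (1 - p) powr (1 + 2 / n) + p * (r / r_eff S) ^ 2) * ?w
      \<le> n * v powr (2 / n) * nsm S * ?w"
    using set_integral_norm_sq_ge_ball_and_tail[of S r] set_integral_norm_sq_eq_nsm[of S] assms
    by (simp add: m\<^sub>1_def m\<^sub>2_def V_def unit_ball_vol_eq algebra_simps)
  with \<open>0 < ?w\<close> show ?thesis by (rule mult_right_le_imp_le[rotated])
qed

lemma scaled_nsm_less:
  fixes S :: "(real ^ 'n::finite) set"
  defines "n \<equiv> real CARD('n)"
  assumes "S \<in> sets lebesgue" "emeasure lebesgue S < \<infinity>" "0 < measure lebesgue S"
    and "set_integrable lebesgue S (\<lambda>x. norm x ^ 2)"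
  shows "n * Defs.unit_ball_vol TYPE('n) powr (2 / n) * nsm S < 2 * pi * exp 1 * nsm S"
proof -
  have "0 < n * Defs.unit_ball_vol TYPE('n) powr (2 / n)"
    using unit_ball_vol_type_pos[where 'n='n] by (simp add: n_def)
  moreover have "0 < n / (n + 2)" by (simp add: n_def)
  ultimately have "0 < nsm S"
    using nsm_ge_ball[OF assms(2-5)] by (metis n_def order_less_le_trans zero_less_mult_pos)
  then show ?thesis
    using unit_ball_vol_powr_less[of n] by (simp add: n_def unit_ball_vol_eq)
qed

theorem lemma4:
  fixes S :: "(real ^ 'n::finite) set" and \<epsilon> :: real
  assumes "S \<in> sets lebesgue"
    and "emeasure lebesgue S < \<infinity>" and "0 < measure lebesgue S"
    and "set_integrable lebesgue S (\<lambda>x. (norm x)^2)"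
    and "0 < \<epsilon>" and "\<epsilon> < 1"
  shows "measure (uniform_measure lebesgue S) (- cball 0 (r_eps S \<epsilon>)) \<le> \<epsilon>"
proof -
  define n where "n = real CARD('n)"
  define c where "c = n / (n + 2)"
  define a where "a = 1 + 2 / n"
  define q where "q = n * Defs.unit_ball_vol TYPE('n) powr (2 / n) * nsm S"
  define k where "k = 2 * pi * exp 1 * nsm S"
  define p where "p = measure (uniform_measure lebesgue S) (- cball 0 (r_eps S \<epsilon>))"
  have "0 < c" "1 \<le> a" by (simp_all add: c_def a_def n_def)
  have "c \<le> q"
    using nsm_ge_ball[OF assms(1-4)] by (simp add: c_def q_def n_def)
  have "q < k"
    using scaled_nsm_less[OF assms(1-4)] by (simp add: q_def k_def n_def)
  have "c * (1 - \<epsilon>) powr a \<le> c"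
    using \<open>0 < c\<close> \<open>1 \<le> a\<close> assms(5,6) by (simp add: mult_left_le powr_le1)
  then have radicand: "0 \<le> (k - c * (1 - \<epsilon>) powr a) / \<epsilon>"
    using \<open>c \<le> q\<close> \<open>q < k\<close> assms(5) by simp
  have r_eps: "r_eps S \<epsilon> = sqrt ((k - c * (1 - \<epsilon>) powr a) / \<epsilon>) * r_eff S"
    by (simp add: r_eps_def Let_def k_def c_def a_def n_def)
  then have "0 \<le> r_eps S \<epsilon>"
    using radicand r_eff_pos[OF assms(3)] by simp
  with nsm_ge_tail[OF assms(1-4)]
  have "c * (1 - p) powr a + p * (r_eps S \<epsilon> / r_eff S) ^ 2 \<le> q"
    unfolding p_def c_def a_def q_def n_def .
  moreover have "(r_eps S \<epsilon> / r_eff S) ^ 2 = (k - c * (1 - \<epsilon>) powr a) / \<epsilon>"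
    using r_eps radicand r_eff_pos[OF assms(3)] by (simp add: power_mult_distrib)
  moreover have "prob_space (uniform_measure lebesgue S)"
    using assms(2,3) by (intro prob_space_uniform_measure) (auto simp: measure_def)
  ultimately show ?thesis
    using le_of_convex_power_bound[of a c q k \<epsilon> p] \<open>0 < c\<close> \<open>1 \<le> a\<close> \<open>c \<le> q\<close> \<open>q < k\<close> assms(5,6)
    by (simp add: p_def prob_space.prob_le_1)
qed

end
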